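(* Let $G$ be a subcubic planar graph of girth at least $9$ which cannot be decomposed into a linear forest and a matching, chosen with $|V(G)|+|E(G)|$ minimum among all such graphs. Then $G$ contains no two adjacent vertices of degree $2$.
   Context: A graph is subcubic if every vertex has degree at most $3$. The girth is the length of a shortest cycle ($\infty$ if acyclic). A linear forest is a graph each of whose components is a path. A decomposition of $G$ into a linear forest and a matching is a partition of $E(G)$ into the edge set of a linear forest and the edge set of a matching. *)

theory Defs
  imports "HOL-Analysis.Analysis"
begin

definition graph :: "'a set \<Rightarrow> 'a set set \<Rightarrow> bool" where
  "graph V E \<longleftrightarrow> finite V \<and> (\<forall>e\<in>E. \<exists>u v. e = {u, v} \<and> u \<noteq> v \<and> u \<in> V \<and> v \<in> V)"

definition degree :: "'a set set \<Rightarrow> 'a \<Rightarrow> nat" where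
  "degree E v = card {e \<in> E. v \<in> e}"

definition subcubic :: "'a set \<Rightarrow> 'a set set \<Rightarrow> bool" where
  "subcubic V E \<longleftrightarrow> (\<forall>v\<in>V. degree E v \<le> 3)"

definition is_cycle :: "'a set \<Rightarrow> 'a set set \<Rightarrow> 'a list \<Rightarrow> bool" where
  "is_cycle V E vs \<longleftrightarrow> length vs \<ge> 3 \<and> distinct vs \<and> set vs \<subseteq> V \<and>
     (\<forall>i < length vs. {vs ! i, vs ! ((i + 1) mod length vs)} \<in> E)"

definition girth_at_least :: "'a set \<Rightarrow> 'a set set \<Rightarrow> nat \<Rightarrow> bool" where
  "girth_at_least V E k \<longleftrightarrow> (\<forall>vs. is_cycle V E vs \<longrightarrow> length vs \<ge> k)"

text \<open>A linear forest: a forest (no cycles) of maximum degree at most 2, i.e. every component is a path.\<close>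
definition linear_forest :: "'a set \<Rightarrow> 'a set set \<Rightarrow> bool" where
  "linear_forest V F \<longleftrightarrow> (\<forall>vs. \<not> is_cycle V F vs) \<and> (\<forall>v\<in>V. degree F v \<le> 2)"

definition matching :: "'a set set \<Rightarrow> bool" where
  "matching M \<longleftrightarrow> (\<forall>e\<in>M. \<forall>e'\<in>M. e \<noteq> e' \<longrightarrow> e \<inter> e' = {})"

definition lf_matching_decomposable :: "'a set \<Rightarrow> 'a set set \<Rightarrow> bool" where
  "lf_matching_decomposable V E \<longleftrightarrow>
     (\<exists>F M. F \<union> M = E \<and> F \<inter> M = {} \<and> linear_forest V F \<and> matching M)"

text \<open>Planarity: a drawing in the plane (complex numbers = R^2) with distinct points for vertices
  and arcs for edges, each arc joining its endpoints, meeting no other vertex, and two arcs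
  meeting only in common endpoints.\<close>
definition planar :: "'a set \<Rightarrow> 'a set set \<Rightarrow> bool" where
  "planar V E \<longleftrightarrow> (\<exists>(p :: 'a \<Rightarrow> complex) (\<gamma> :: 'a set \<Rightarrow> real \<Rightarrow> complex).
     inj_on p V \<and>
     (\<forall>e\<in>E. arc (\<gamma> e) \<and> {pathstart (\<gamma> e), pathfinish (\<gamma> e)} = p ` e \<and>
              path_image (\<gamma> e) \<inter> p ` V = p ` e) \<and>
     (\<forall>e\<in>E. \<forall>e'\<in>E. e \<noteq> e' \<longrightarrow> path_image (\<gamma> e) \<inter> path_image (\<gamma> e') \<subseteq> p ` (e \<inter> e')))"

definition bad_graph :: "'a set \<Rightarrow> 'a set set \<Rightarrow> bool" where
  "bad_graph V E \<longleftrightarrow> graph V E \<and> subcubic V E \<and> planar V E \<and> girth_at_least V E 9 \<and>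
     \<not> lf_matching_decomposable V E"

end

theory Submission imports Defs begin

text \<open>Delete the edge \<open>uv\<close> between the two vertices of degree 2. Edge deletion keeps the graph
  subcubic, planar and of girth at least 9, so by minimality the smaller graph decomposes into a
  linear forest \<open>F\<close> and a matching \<open>M\<close>. If neither end of \<open>uv\<close> is covered by \<open>M\<close>, add \<open>uv\<close> to \<open>M\<close>.
  Otherwise add it to \<open>F\<close>: an end covered by \<open>M\<close> then has degree 1 in the new forest, and a
  cycle through \<open>uv\<close> would need degree 2 there, so no cycle arises.\<close>

lemma graph_edges_subset_Pow: "graph V E \<Longrightarrow> E \<subseteq> Pow V"
  unfolding graph_def by fastforce

lemma graph_finite_edges: "graph V E \<Longrightarrow> finite E"
  using graph_edges_subset_Pow unfolding graph_def by (metis finite_Pow_iff rev_finite_subset)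

lemma degree_mono: "F \<subseteq> E \<Longrightarrow> finite E \<Longrightarrow> degree F v \<le> degree E v"
  unfolding degree_def by (rule card_mono) auto

lemma degree_Diff_incident:
  assumes "finite E" "e \<in> E" "w \<in> e"
  shows "degree (E - {e}) w = degree E w - 1"
proof -
  have "{x \<in> E - {e}. w \<in> x} = {x \<in> E. w \<in> x} - {e}" by blast
  then show ?thesis unfolding degree_def using assms by (simp add: card_Diff_singleton)
qed

lemma is_cycle_mono: "F \<subseteq> E \<Longrightarrow> is_cycle V F vs \<Longrightarrow> is_cycle V E vs"
  unfolding is_cycle_def by blast

lemma is_cycle_degree_ge_2:
  assumes "finite F" "is_cycle V F vs" "w \<in> set vs"
  shows "2 \<le> degree F w"
proof -
  let ?n = "length vs"
  have n3: "3 \<le> ?n" and dis: "distinct vs"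
    and edge: "\<And>i. i < ?n \<Longrightarrow> {vs ! i, vs ! ((i + 1) mod ?n)} \<in> F"
    using assms(2) unfolding is_cycle_def by auto
  obtain i where i: "i < ?n" "vs ! i = w" using assms(3) by (meson in_set_conv_nth)
  define k where "k = (i + 1) mod ?n"
  define j where "j = (if i = 0 then ?n - 1 else i - 1)"
  have k: "k < ?n" unfolding k_def using i(1) by (intro mod_less_divisor) linarith
  have j: "j < ?n" "(j + 1) mod ?n = i" using i n3 unfolding j_def by auto
  have "k \<noteq> j" "k \<noteq> i" "j \<noteq> i"
    using i n3 unfolding k_def j_def by (auto simp: mod_Suc)
  then have "vs ! k \<noteq> vs ! j" "vs ! k \<noteq> w" "vs ! j \<noteq> w"
    using dis i k j by (auto simp: nth_eq_iff_index_eq)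
  then have "card {{w, vs ! k}, {vs ! j, w}} = 2" by (auto simp: doubleton_eq_iff)
  moreover have "{{w, vs ! k}, {vs ! j, w}} \<subseteq> {e \<in> F. w \<in> e}"
    using edge[OF i(1)] edge[OF j(1)] i j unfolding k_def by auto
  then have "card {{w, vs ! k}, {vs ! j, w}} \<le> degree F w"
    unfolding degree_def using assms(1) by (intro card_mono) auto
  ultimately show ?thesis by simp
qed

lemma degree_image:
  assumes "inj_on f V" "E \<subseteq> Pow V" "v \<in> V"
  shows "degree ((`) f ` E) (f v) = degree E v"
proof -
  have "f v \<in> f ` e \<longleftrightarrow> v \<in> e" if "e \<in> E" for e
    using that assms by (intro inj_on_image_mem_iff) auto
  then have "{e' \<in> (`) f ` E. f v \<in> e'} = (`) f ` {e \<in> E. v \<in> e}" by auto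
  moreover have "inj_on ((`) f) {e \<in> E. v \<in> e}"
    using assms(2) by (intro inj_on_subset[OF inj_on_image_Pow[OF assms(1)]]) auto
  ultimately show ?thesis unfolding degree_def by (simp add: card_image)
qed

lemma is_cycle_image:
  assumes "inj_on f V" "is_cycle V F vs"
  shows "is_cycle (f ` V) ((`) f ` F) (map f vs)"
proof -
  have vs: "3 \<le> length vs" "distinct vs" "set vs \<subseteq> V"
    and edge: "\<And>i. i < length vs \<Longrightarrow> {vs ! i, vs ! ((i + 1) mod length vs)} \<in> F"
    using assms(2) unfolding is_cycle_def by auto
  have "distinct (map f vs)"
    using vs inj_on_subset[OF assms(1)] by (simp add: distinct_map)
  moreover have "{map f vs ! i, map f vs ! ((i + 1) mod length vs)} \<in> (`) f ` F"
    if "i < length vs" for i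
  proof -
    have "(i + 1) mod length vs < length vs" using that by (intro mod_less_divisor) linarith
    then have "{map f vs ! i, map f vs ! ((i + 1) mod length vs)}
        = f ` {vs ! i, vs ! ((i + 1) mod length vs)}"
      using that by simp
    then show ?thesis using edge[OF that] by blast
  qed
  ultimately show ?thesis using vs unfolding is_cycle_def by auto
qed

lemma inv_into_image_edges:
  assumes "inj_on f V" "E \<subseteq> Pow V"
  shows "(`) (inv_into V f) ` (`) f ` E = E"
proof -
  have "inv_into V f ` f ` e = e" if "e \<in> E" for e
    using that assms by (intro inv_into_image_cancel) auto
  then show ?thesis by (simp add: image_image)
qed

lemma is_cycle_inv_image:
  assumes "inj_on f V" "F \<subseteq> Pow V" "is_cycle (f ` V) ((`) f ` F) ws"
  shows "is_cycle V F (map (inv_into V f) ws)"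
  using is_cycle_image[OF inj_on_inv_into[OF subset_refl] assms(3)] assms(1,2)
  by (simp add: inv_into_image_cancel inv_into_image_edges)

lemma graph_image:
  assumes "inj_on f V" "graph V E"
  shows "graph (f ` V) ((`) f ` E)"
  unfolding graph_def
proof (intro conjI ballI)
  show "finite (f ` V)" using assms(2) unfolding graph_def by simp
next
  fix e' assume "e' \<in> (`) f ` E"
  then obtain a b where "e' = {f a, f b}" "a \<noteq> b" "a \<in> V" "b \<in> V"
    using assms(2) unfolding graph_def by auto
  moreover have "f a \<noteq> f b" using calculation assms(1) by (meson inj_onD)
  ultimately show "\<exists>x y. e' = {x, y} \<and> x \<noteq> y \<and> x \<in> f ` V \<and> y \<in> f ` V" by blast
qed

lemma subcubic_image:
  assumes "inj_on f V" "E \<subseteq> Pow V" "subcubic V E"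
  shows "subcubic (f ` V) ((`) f ` E)"
  using assms(3) degree_image[OF assms(1,2)] unfolding subcubic_def by auto

lemma girth_at_least_image:
  assumes "inj_on f V" "E \<subseteq> Pow V" "girth_at_least V E k"
  shows "girth_at_least (f ` V) ((`) f ` E) k"
  using assms is_cycle_inv_image unfolding girth_at_least_def by (metis length_map)

lemma planar_image:
  assumes "inj_on f V" "E \<subseteq> Pow V" "planar V E"
  shows "planar (f ` V) ((`) f ` E)"
proof -
  obtain p :: "_ \<Rightarrow> complex" and \<gamma> :: "_ \<Rightarrow> real \<Rightarrow> complex" where
    p: "inj_on p V" and
    arcs: "\<forall>e\<in>E. arc (\<gamma> e) \<and> {pathstart (\<gamma> e), pathfinish (\<gamma> e)} = p ` e \<and>
              path_image (\<gamma> e) \<inter> p ` V = p ` e" and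
    crossings: "\<forall>e\<in>E. \<forall>e'\<in>E. e \<noteq> e' \<longrightarrow>
              path_image (\<gamma> e) \<inter> path_image (\<gamma> e') \<subseteq> p ` (e \<inter> e')"
    using assms(3) unfolding planar_def by blast
  define g where "g = inv_into V f"
  have vertices_back: "g ` f ` V = V"
    using assms(1) unfolding g_def by (simp add: inv_into_image_cancel)
  have edge_back: "g ` f ` e = e" if "e \<in> E" for e
    using that assms unfolding g_def by (intro inv_into_image_cancel) auto
  have Int_back: "g ` (f ` e \<inter> f ` e') = e \<inter> e'" if "e \<in> E" "e' \<in> E" for e e'
  proof -
    have sub: "e \<subseteq> V" "e' \<subseteq> V" using that assms(2) by auto
    then have "g ` f ` (e \<inter> e') = e \<inter> e'"
      using assms(1) unfolding g_def by (intro inv_into_image_cancel) auto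
    then show ?thesis using sub by (simp add: inj_on_image_Int[OF assms(1)])
  qed
  have "inj_on (p \<circ> g) (f ` V)"
    using p vertices_back unfolding g_def by (metis comp_inj_on inj_on_inv_into subset_refl)
  moreover have "\<forall>e\<in>E. arc (\<gamma> (g ` f ` e)) \<and>
          {pathstart (\<gamma> (g ` f ` e)), pathfinish (\<gamma> (g ` f ` e))} = p ` g ` f ` e \<and>
          path_image (\<gamma> (g ` f ` e)) \<inter> p ` g ` f ` V = p ` g ` f ` e"
    using arcs edge_back vertices_back by simp
  moreover have "\<forall>e\<in>E. \<forall>e'\<in>E. f ` e \<noteq> f ` e' \<longrightarrow> path_image (\<gamma> (g ` f ` e)) \<inter>
          path_image (\<gamma> (g ` f ` e')) \<subseteq> p ` g ` (f ` e \<inter> f ` e')"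
    using crossings edge_back Int_back by auto
  ultimately show ?thesis unfolding planar_def
    by (intro exI[of _ "p \<circ> g"] exI[of _ "\<gamma> \<circ> (`) g"]) (simp add: image_image)
qed

lemma linear_forest_image:
  assumes "inj_on f V" "F \<subseteq> Pow V" "linear_forest V F"
  shows "linear_forest (f ` V) ((`) f ` F)"
  unfolding linear_forest_def
proof (intro conjI allI ballI notI)
  fix ws assume "is_cycle (f ` V) ((`) f ` F) ws"
  then show False
    using is_cycle_inv_image[OF assms(1,2)] assms(3) unfolding linear_forest_def by blast
next
  fix x assume "x \<in> f ` V"
  then show "degree ((`) f ` F) x \<le> 2"
    using degree_image[OF assms(1,2)] assms(3) unfolding linear_forest_def by auto
qed

lemma matching_image:
  assumes "inj_on f V" "M \<subseteq> Pow V" "matching M"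
  shows "matching ((`) f ` M)"
  unfolding matching_def
proof (intro ballI impI)
  fix a b assume "a \<in> (`) f ` M" "b \<in> (`) f ` M" "a \<noteq> b"
  then obtain e e' where e: "e \<in> M" "e' \<in> M" "a = f ` e" "b = f ` e'" "e \<noteq> e'" by auto
  then have "e \<inter> e' = {}" using assms(3) unfolding matching_def by blast
  moreover have "f ` e \<inter> f ` e' = f ` (e \<inter> e')"
    using e assms(1,2) by (intro inj_on_image_Int[symmetric]) auto
  ultimately show "a \<inter> b = {}" using e by simp
qed

lemma lf_matching_decomposable_image:
  assumes "inj_on f V" "E \<subseteq> Pow V" "lf_matching_decomposable V E"
  shows "lf_matching_decomposable (f ` V) ((`) f ` E)"
proof -
  obtain F M where FM: "F \<union> M = E" "F \<inter> M = {}" "linear_forest V F" "matching M"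
    using assms(3) unfolding lf_matching_decomposable_def by blast
  have "inj_on ((`) f) E" using inj_on_image_Pow[OF assms(1)] assms(2) by (rule inj_on_subset)
  then have "(`) f ` F \<inter> (`) f ` M = {}"
    using FM(1,2) by (metis inj_on_image_Int Un_upper1 Un_upper2 image_empty)
  moreover have "linear_forest (f ` V) ((`) f ` F)" "matching ((`) f ` M)"
    using FM assms(1,2) by (auto intro: linear_forest_image matching_image)
  ultimately show ?thesis
    unfolding lf_matching_decomposable_def using FM(1) by (metis image_Un)
qed

lemma lf_matching_decomposable_inv_image:
  assumes "inj_on f V" "E \<subseteq> Pow V" "lf_matching_decomposable (f ` V) ((`) f ` E)"
  shows "lf_matching_decomposable V E"
proof -
  have "(`) f ` E \<subseteq> Pow (f ` V)" using assms(2) by auto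
  from lf_matching_decomposable_image[OF inj_on_inv_into[OF subset_refl] this assms(3)]
  show ?thesis using assms(1,2) by (simp add: inv_into_image_cancel inv_into_image_edges)
qed

lemma bad_graph_image:
  assumes "inj_on f V" "bad_graph V E"
  shows "bad_graph (f ` V) ((`) f ` E)"
proof -
  have "E \<subseteq> Pow V" using assms(2) graph_edges_subset_Pow unfolding bad_graph_def by blast
  then show ?thesis
    using assms graph_image subcubic_image planar_image girth_at_least_image
      lf_matching_decomposable_inv_image
    unfolding bad_graph_def by metis
qed

text \<open>The minimality hypothesis of the theorem only ranges over graphs on \<open>nat\<close>, so a smaller
  counterexample has to be copied onto natural-number vertices before it can be compared.\<close>

lemma bad_graph_nat_copy:
  assumes "bad_graph V E"
  obtains V' :: "nat set" and E' where "bad_graph V' E'" "card V' = card V" "card E' = card E"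
proof -
  have g: "graph V E" using assms unfolding bad_graph_def by blast
  then have "finite V" unfolding graph_def by simp
  then obtain f :: "'a \<Rightarrow> nat" where f: "inj_on f V"
    using finite_imp_inj_to_nat_seg by blast
  have "inj_on ((`) f) E"
    using inj_on_image_Pow[OF f] graph_edges_subset_Pow[OF g] by (rule inj_on_subset)
  then show ?thesis
    using that[OF bad_graph_image[OF f assms]] f by (simp add: card_image)
qed

lemma planar_subset:
  assumes "planar V E" "F \<subseteq> E"
  shows "planar V F"
proof -
  obtain p :: "_ \<Rightarrow> complex" and \<gamma> :: "_ \<Rightarrow> real \<Rightarrow> complex" where
    "inj_on p V"
    "\<forall>e\<in>E. arc (\<gamma> e) \<and> {pathstart (\<gamma> e), pathfinish (\<gamma> e)} = p ` e \<and>
              path_image (\<gamma> e) \<inter> p ` V = p ` e"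
    "\<forall>e\<in>E. \<forall>e'\<in>E. e \<noteq> e' \<longrightarrow>
              path_image (\<gamma> e) \<inter> path_image (\<gamma> e') \<subseteq> p ` (e \<inter> e')"
    using assms(1) unfolding planar_def by blast
  with assms(2) show ?thesis
    unfolding planar_def by (intro exI[of _ p] exI[of _ \<gamma>]) (simp add: subset_iff)
qed

lemma bad_graph_edge_subset:
  assumes "bad_graph V E" "F \<subseteq> E" "\<not> lf_matching_decomposable V F"
  shows "bad_graph V F"
proof -
  have g: "graph V E" and "subcubic V E" "planar V E" "girth_at_least V E 9"
    using assms(1) unfolding bad_graph_def by auto
  moreover have "degree F v \<le> degree E v" for v
    using assms(2) graph_finite_edges[OF g] by (rule degree_mono)
  ultimately show ?thesis
    using assms(2,3) planar_subset is_cycle_mono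
    unfolding bad_graph_def graph_def subcubic_def girth_at_least_def
    by (meson order_trans subsetD)
qed

lemma is_cycle_insert_edge:
  assumes "is_cycle V (insert {u, v} F) vs" "\<not> is_cycle V F vs"
  shows "u \<in> set vs" "v \<in> set vs"
proof -
  obtain i where i: "i < length vs" "{vs ! i, vs ! ((i + 1) mod length vs)} \<notin> F"
    using assms unfolding is_cycle_def by auto
  then have "{vs ! i, vs ! ((i + 1) mod length vs)} = {u, v}"
    using assms(1) unfolding is_cycle_def by auto
  moreover have "(i + 1) mod length vs < length vs" using i(1) by (intro mod_less_divisor) linarith
  then have "vs ! i \<in> set vs" "vs ! ((i + 1) mod length vs) \<in> set vs"
    using i(1) by simp_all
  ultimately show "u \<in> set vs" "v \<in> set vs" by (auto simp: doubleton_eq_iff)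
qed

lemma linear_forest_insert_edge:
  assumes "linear_forest V F" "finite F" "w \<in> {u, v}"
    and "degree (insert {u, v} F) w \<le> 1"
    and "degree (insert {u, v} F) u \<le> 2" "degree (insert {u, v} F) v \<le> 2"
  shows "linear_forest V (insert {u, v} F)"
  unfolding linear_forest_def
proof (intro conjI allI ballI notI)
  fix vs assume cycle: "is_cycle V (insert {u, v} F) vs"
  moreover have "\<not> is_cycle V F vs" using assms(1) unfolding linear_forest_def by blast
  ultimately have "u \<in> set vs" "v \<in> set vs" by (simp_all add: is_cycle_insert_edge)
  then have "2 \<le> degree (insert {u, v} F) w"
    using assms(2,3) cycle by (auto intro: is_cycle_degree_ge_2)
  then show False using assms(4) by simp
next
  fix x assume "x \<in> V"
  show "degree (insert {u, v} F) x \<le> 2"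
  proof (cases "x \<in> {u, v}")
    case False
    then have "{e \<in> insert {u, v} F. x \<in> e} = {e \<in> F. x \<in> e}" by auto
    then show ?thesis using assms(1) \<open>x \<in> V\<close> unfolding linear_forest_def degree_def by simp
  qed (use assms(5,6) in auto)
qed

lemma matching_insert: "matching M \<Longrightarrow> \<forall>e\<in>M. e \<inter> d = {} \<Longrightarrow> matching (insert d M)"
  unfolding matching_def by blast

lemma lf_matching_decomposable_insert_edge:
  assumes "finite E" "{u, v} \<in> E" "degree E u \<le> 2" "degree E v \<le> 2"
    and "lf_matching_decomposable V (E - {{u, v}})"
  shows "lf_matching_decomposable V E"
proof -
  obtain F M where FM: "F \<union> M = E - {{u, v}}" "F \<inter> M = {}" "linear_forest V F" "matching M"
    using assms(5) unfolding lf_matching_decomposable_def by blast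
  consider (covered) w e where "w \<in> {u, v}" "e \<in> M" "w \<in> e" | (free) "\<forall>e\<in>M. e \<inter> {u, v} = {}"
    by blast
  then show ?thesis
  proof cases
    case covered
    let ?F = "insert {u, v} F"
    have "?F \<subseteq> E - {e}" using FM(1,2) covered(2) assms(2) by auto
    then have "degree ?F w \<le> degree (E - {e}) w" using assms(1) by (intro degree_mono) auto
    also have "\<dots> = degree E w - 1"
      using assms(1) FM(1) covered by (intro degree_Diff_incident) auto
    also have "\<dots> \<le> 1" using assms(3,4) covered(1) by auto
    finally have "degree ?F w \<le> 1" .
    moreover have "?F \<subseteq> E" "finite F" using FM(1) assms(1,2) by (auto intro: finite_subset)
    then have "degree ?F u \<le> 2" "degree ?F v \<le> 2"
      using assms(1,3,4) degree_mono order_trans by metis+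
    ultimately have "linear_forest V ?F"
      using FM(3) covered(1) \<open>finite F\<close> by (intro linear_forest_insert_edge)
    moreover have "?F \<union> M = E" "?F \<inter> M = {}" using FM(1,2) assms(2) by auto
    ultimately show ?thesis using FM(4) unfolding lf_matching_decomposable_def by blast
  next
    case free
    then have "matching (insert {u, v} M)" using FM(4) by (intro matching_insert)
    moreover have "F \<union> insert {u, v} M = E" "F \<inter> insert {u, v} M = {}"
      using FM(1,2) assms(2) by auto
    ultimately show ?thesis using FM(3) unfolding lf_matching_decomposable_def by blast
  qed
qed

theorem lemma19:
  fixes V :: "'a set" and E :: "'a set set"
  assumes bad: "bad_graph V E"
    and minimal: "\<And>(V' :: nat set) E'. bad_graph V' E' \<Longrightarrow> card V + card E \<le> card V' + card E'"
  shows "\<not> (\<exists>u v. {u, v} \<in> E \<and> degree E u = 2 \<and> degree E v = 2)"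
proof
  assume "\<exists>u v. {u, v} \<in> E \<and> degree E u = 2 \<and> degree E v = 2"
  then obtain u v where uv: "{u, v} \<in> E" "degree E u = 2" "degree E v = 2" by blast
  have fin: "finite E" using bad graph_finite_edges unfolding bad_graph_def by blast
  have "lf_matching_decomposable V (E - {{u, v}})"
  proof (rule ccontr)
    assume "\<not> lf_matching_decomposable V (E - {{u, v}})"
    with bad have "bad_graph V (E - {{u, v}})" by (blast intro: bad_graph_edge_subset)
    then obtain V' :: "nat set" and E' where
      "bad_graph V' E'" "card V' = card V" "card E' = card (E - {{u, v}})"
      by (rule bad_graph_nat_copy)
    with minimal have "card E \<le> card (E - {{u, v}})" by fastforce
    moreover have "card (E - {{u, v}}) < card E" using fin uv(1) by (rule card_Diff1_less)
    ultimately show False by simp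
  qed
  then have "lf_matching_decomposable V E"
    using uv by (intro lf_matching_decomposable_insert_edge[OF fin uv(1)]) simp_all
  then show False using bad unfolding bad_graph_def by blast
qed

end
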